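(* Consider a $2\times N$ switch with traffic pattern consisting of one broadcast flow $(1,[N])$ from input 1 and, for each $i\in[N]$, a unicast flow $(2,\{i\})$ from input 2 to output $i$. The enhanced conflict graph of this traffic pattern is perfect.
   Context: A flow is $(i,J)$ with input $i$ and fanout $J$; its subflows are $(i,J,j)$, $j\in J$. Enhanced conflict graph: one vertex per subflow; distinct subflows $(i,J,j),(i',J',j')$ adjacent iff $j=j'$, or $i=i'$ and $J\ne J'$. A graph is perfect if in every induced subgraph the clique number equals the chromatic number. *)

theory Defs
  imports Main
begin

text \<open>Flows (input, fanout) and subflows (input, fanout, output).\<close>
type_synonym flow = "nat \<times> nat set"
type_synonym subflow = "nat \<times> nat set \<times> nat"

definition subflows :: "flow set \<Rightarrow> subflow set" where
  "subflows F = {(i, J, j). (i, J) \<in> F \<and> j \<in> J}"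

definition ecg_adj :: "subflow \<Rightarrow> subflow \<Rightarrow> bool" where
  "ecg_adj s t \<longleftrightarrow> s \<noteq> t \<and>
     (snd (snd s) = snd (snd t) \<or> (fst s = fst t \<and> fst (snd s) \<noteq> fst (snd t)))"

definition is_clique :: "('a \<Rightarrow> 'a \<Rightarrow> bool) \<Rightarrow> 'a set \<Rightarrow> bool" where
  "is_clique E K \<longleftrightarrow> (\<forall>x\<in>K. \<forall>y\<in>K. x \<noteq> y \<longrightarrow> E x y)"

definition clique_number :: "('a \<Rightarrow> 'a \<Rightarrow> bool) \<Rightarrow> 'a set \<Rightarrow> nat" where
  "clique_number E V = Max {card K | K. K \<subseteq> V \<and> is_clique E K}"

definition proper_colouring :: "('a \<Rightarrow> 'a \<Rightarrow> bool) \<Rightarrow> 'a set \<Rightarrow> nat \<Rightarrow> ('a \<Rightarrow> nat) \<Rightarrow> bool" where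
  "proper_colouring E V k c \<longleftrightarrow>
     (\<forall>x\<in>V. c x < k) \<and> (\<forall>x\<in>V. \<forall>y\<in>V. x \<noteq> y \<and> E x y \<longrightarrow> c x \<noteq> c y)"

definition chromatic_number :: "('a \<Rightarrow> 'a \<Rightarrow> bool) \<Rightarrow> 'a set \<Rightarrow> nat" where
  "chromatic_number E V = (LEAST k. \<exists>c. proper_colouring E V k c)"

definition perfect :: "('a \<Rightarrow> 'a \<Rightarrow> bool) \<Rightarrow> 'a set \<Rightarrow> bool" where
  "perfect E V \<longleftrightarrow> finite V \<and> (\<forall>S\<subseteq>V. clique_number E S = chromatic_number E S)"

end

theory Submission
  imports Defs
begin

text \<open>The subflows of the broadcast flow share input and fanout, so they are pairwise
  non-adjacent; the unicast subflows share input but have distinct fanouts, so they form a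
  clique. Hence the enhanced conflict graph is a split graph, and split graphs are perfect:
  colour the clique K with card K colours and give each vertex of the independent part the
  colour of a clique vertex it misses; only vertices adjacent to all of K need one extra
  colour, and such a vertex enlarges K to a clique of that size.\<close>

definition is_independent :: "('a \<Rightarrow> 'a \<Rightarrow> bool) \<Rightarrow> 'a set \<Rightarrow> bool" where
  "is_independent E I \<longleftrightarrow> (\<forall>x\<in>I. \<forall>y\<in>I. x \<noteq> y \<longrightarrow> \<not> E x y)"

lemma card_clique_le_colours:
  assumes "K \<subseteq> S" "is_clique E K" "proper_colouring E S k c"
  shows "card K \<le> k"
proof -
  have "inj_on c K"
    using assms unfolding inj_on_def is_clique_def proper_colouring_def by blast
  then have "card K = card (c ` K)" by (simp add: card_image)
  also have "\<dots> \<le> card {..<k}"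
    using assms unfolding proper_colouring_def by (intro card_mono) auto
  finally show ?thesis by simp
qed

lemma clique_number_eq_chromatic_number_witness:
  assumes "K \<subseteq> S" "is_clique E K" "card K = k" "proper_colouring E S k c"
  shows "clique_number E S = k" and "chromatic_number E S = k"
proof -
  let ?A = "{card K | K. K \<subseteq> S \<and> is_clique E K}"
  have le: "\<forall>y\<in>?A. y \<le> k" using card_clique_le_colours assms(4) by blast
  have "finite ?A" by (rule finite_subset[of _ "{..k}"]) (use le in auto)
  moreover have "k \<in> ?A" using assms by blast
  ultimately show "clique_number E S = k"
    unfolding clique_number_def using le by (intro Max_eqI) auto
  show "chromatic_number E S = k"
    unfolding chromatic_number_def
  proof (rule Least_equality)
    show "\<exists>c. proper_colouring E S k c" using assms by blast
  next
    fix k' assume "\<exists>c. proper_colouring E S k' c"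
    then show "k \<le> k'" using card_clique_le_colours assms(1,2,3) by blast
  qed
qed

lemma split_graph_clique_number_eq_chromatic_number:
  assumes "finite V" "V = K \<union> I" "is_clique E K" "is_independent E I"
    and sym: "\<And>x y. E x y \<Longrightarrow> E y x"
  shows "clique_number E V = chromatic_number E V"
proof -
  define m where "m = card K"
  have finK: "finite K" using assms(1,2) by simp
  obtain f where f: "bij_betw f K {0..<m}"
    using ex_bij_betw_finite_nat[OF finK] unfolding m_def by blast
  have f_less: "y \<in> K \<Longrightarrow> f y < m" for y using f by (auto simp: bij_betw_def)
  have f_inj: "inj_on f K" using f by (simp add: bij_betw_def)
  define miss where "miss v = (SOME y. y \<in> K \<and> \<not> E v y)" for v
  have miss: "miss v \<in> K" "\<not> E v (miss v)" if "\<exists>y\<in>K. \<not> E v y" for v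
    using someI_ex[of "\<lambda>y. y \<in> K \<and> \<not> E v y"] that unfolding miss_def by auto
  define F where "F = {v \<in> I - K. \<forall>y\<in>K. E v y}"
  define c where "c v = (if v \<in> K then f v
      else if \<exists>y\<in>K. \<not> E v y then f (miss v) else m)" for v
  have colour_range: "c v < m \<or> v \<in> F \<and> c v = m" if "v \<in> V" for v
    using that assms(2) f_less miss unfolding c_def F_def by auto
  have clique_outside: "c x \<noteq> c v" if "x \<in> K" "v \<notin> K" "E v x" for x v
  proof (cases "\<exists>y\<in>K. \<not> E v y")
    case True
    then have "miss v \<noteq> x" using miss that(3) by blast
    then show ?thesis
      using True that(1,2) miss f_inj unfolding c_def inj_on_def by auto
  next
    case False
    then show ?thesis using that f_less unfolding c_def by auto
  qed
  have adjacent_colours: "c x \<noteq> c y" if xy: "x \<in> V" "y \<in> V" "x \<noteq> y" "E x y" for x y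
  proof -
    consider "x \<in> K" "y \<in> K" | "x \<in> K" "y \<notin> K" | "x \<notin> K" "y \<in> K" | "x \<in> I" "y \<in> I"
      using xy(1,2) assms(2) by blast
    then show ?thesis
    proof cases
      case 1
      then show ?thesis using f_inj xy(3) unfolding inj_on_def c_def by auto
    next
      case 2
      then show ?thesis using clique_outside sym xy(4) by blast
    next
      case 3
      then show ?thesis using clique_outside xy(4) by metis
    next
      case 4
      then show ?thesis using assms(4) xy(3,4) unfolding is_independent_def by blast
    qed
  qed
  show ?thesis
  proof (cases "F = {}")
    case True
    then have "proper_colouring E V m c"
      using colour_range adjacent_colours unfolding proper_colouring_def by blast
    moreover have "K \<subseteq> V" using assms(2) by blast
    ultimately show ?thesis
      using clique_number_eq_chromatic_number_witness[OF _ assms(3) m_def[symmetric]] by metis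
  next
    case False
    then obtain v where v: "v \<in> I - K" "\<forall>y\<in>K. E v y" unfolding F_def by blast
    have "proper_colouring E V (Suc m) c"
      using colour_range adjacent_colours unfolding proper_colouring_def by (metis less_SucI lessI)
    moreover have "is_clique E (insert v K)"
      using assms(3) v(2) sym unfolding is_clique_def by auto
    moreover have "card (insert v K) = Suc m"
      using v(1) finK unfolding m_def by simp
    moreover have "insert v K \<subseteq> V" using v(1) assms(2) by blast
    ultimately show ?thesis
      using clique_number_eq_chromatic_number_witness by metis
  qed
qed

lemma perfect_split_graph:
  assumes "finite V" "V = K \<union> I" "is_clique E K" "is_independent E I"
    and "\<And>x y. E x y \<Longrightarrow> E y x"
  shows "perfect E V"
  unfolding perfect_def
proof (intro conjI allI impI)
  fix S assume "S \<subseteq> V"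
  then have "S = (S \<inter> K) \<union> (S \<inter> I)" using assms(2) by blast
  moreover have "is_clique E (S \<inter> K)" using assms(3) unfolding is_clique_def by blast
  moreover have "is_independent E (S \<inter> I)"
    using assms(4) unfolding is_independent_def by blast
  ultimately show "clique_number E S = chromatic_number E S"
    using split_graph_clique_number_eq_chromatic_number assms(1,5) \<open>S \<subseteq> V\<close>
    by (metis finite_subset)
qed (use assms in simp)

lemma ecg_adj_sym: "ecg_adj s t \<Longrightarrow> ecg_adj t s"
  by (auto simp: ecg_adj_def)

lemma independent_subflows_of_flow: "is_independent ecg_adj {(i, J, j) | j. j \<in> J}"
  by (auto simp: is_independent_def ecg_adj_def)

lemma clique_unicast_subflows: "is_clique ecg_adj {(i, {j}, j) | j. j \<in> A}"
  by (auto simp: is_clique_def ecg_adj_def)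

theorem theorem7:
  fixes N :: nat
  assumes "1 \<le> N"
  shows "perfect ecg_adj (subflows ({(1, {1..N})} \<union> {(2, {i}) | i. i \<in> {1..N}}))"
proof (rule perfect_split_graph)
  let ?K = "{(2::nat, {j}, j) | j. j \<in> {1..N}}" and ?I = "{(1::nat, {1..N}, j) | j. j \<in> {1..N}}"
  show V: "subflows ({(1, {1..N})} \<union> {(2, {i}) | i. i \<in> {1..N}}) = ?K \<union> ?I"
    unfolding subflows_def by auto
  show "finite (subflows ({(1, {1..N})} \<union> {(2, {i}) | i. i \<in> {1..N}}))"
    unfolding V by (simp add: setcompr_eq_image)
  show "is_clique ecg_adj ?K" by (rule clique_unicast_subflows)
  show "is_independent ecg_adj ?I" by (rule independent_subflows_of_flow)
qed (rule ecg_adj_sym)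

end
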